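(* Let $X,Y$ be totally ordered alphabets. The linear map $\Phi_\bullet(X,Y):\mathbf{H}_\mathrm{Pack}\to\mathbf{A}_{X,Y}$, $M\mapsto\Phi_M(X,Y)$, is injective if and only if both $X$ and $Y$ are infinite.
   Context: A totally ordered alphabet is a finite or countable set with a total order. For totally ordered alphabets $X,Y$, $\mathbf{A}_{X,Y}=\mathbb{Q}[[t_{i,j}\mid i\in X,\ j\in Y]]$ (commuting indeterminates). A packed matrix is a matrix with entries in $\mathbb{N}$ with no zero row and no zero column (the empty matrix $1$ is packed); $\mathrm{Pack}$ is their set and $\mathbf{H}_\mathrm{Pack}$ the $\mathbb{Q}$-vector space with basis $\mathrm{Pack}$. For $M=(m_{r,s})\in\mathrm{Pack}$ with $k$ rows and $l$ columns, $\Phi_M(X,Y)=\sum_{i_1<\dots<i_k\in X,\ j_1<\dots<j_l\in Y}\prod_{r=1}^k\prod_{s=1}^l t_{i_r,j_s}^{m_{r,s}}$ ($\Phi_1=1$), extended linearly. *)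

theory Defs
  imports "Jordan_Normal_Form.Matrix" "HOL-Library.FuncSet" "HOL-Library.Countable_Set"
begin

definition packed :: "nat mat \<Rightarrow> bool" where
  "packed M \<longleftrightarrow>
     (\<forall>r<dim_row M. \<exists>s<dim_col M. M $$ (r,s) \<noteq> 0) \<and>
     (\<forall>s<dim_col M. \<exists>r<dim_row M. M $$ (r,s) \<noteq> 0)"

text \<open>A monomial in the commuting indeterminates t_{i,j} is an exponent function
  on pairs (i,j); an element of Q[[t_{i,j}]] is represented by its coefficient function
  on monomials.\<close>
type_synonym ('a,'b) monom = "'a \<times> 'b \<Rightarrow> nat"
type_synonym ('a,'b) series = "('a,'b) monom \<Rightarrow> rat"

text \<open>The monomial prod_{r,s} t_{f r, g s}^{M r s}.\<close>
definition monom_of :: "nat mat \<Rightarrow> (nat \<Rightarrow> 'a) \<Rightarrow> (nat \<Rightarrow> 'b) \<Rightarrow> ('a,'b) monom" where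
  "monom_of M f g = (\<lambda>(a,b). \<Sum>r<dim_row M. \<Sum>s<dim_col M.
       if f r = a \<and> g s = b then M $$ (r,s) else 0)"

definition Phi :: "'a::linorder set \<Rightarrow> 'b::linorder set \<Rightarrow> nat mat \<Rightarrow> ('a,'b) series" where
  "Phi X Y M = (\<lambda>m. of_nat (card
     {(f,g). f \<in> {..<dim_row M} \<rightarrow>\<^sub>E X \<and> strict_mono_on {..<dim_row M} f \<and>
             g \<in> {..<dim_col M} \<rightarrow>\<^sub>E Y \<and> strict_mono_on {..<dim_col M} g \<and>
             m = monom_of M f g}))"

definition HPack :: "(nat mat \<Rightarrow> rat) set" where
  "HPack = {c. finite {M. c M \<noteq> 0} \<and> (\<forall>M. c M \<noteq> 0 \<longrightarrow> packed M)}"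

definition Phi_lin :: "'a::linorder set \<Rightarrow> 'b::linorder set \<Rightarrow> (nat mat \<Rightarrow> rat) \<Rightarrow> ('a,'b) series" where
  "Phi_lin X Y c = (\<lambda>m. \<Sum>M\<in>{M. c M \<noteq> 0}. c M * Phi X Y M m)"

end

theory Submission
  imports Defs
begin

text \<open>For a packed matrix M and strictly increasing index maps f, g, the monomial
  monom_of M f g remembers everything: the variables occurring in it are exactly the
  t_{f r, g s}, so its row and column supports are the images of f and g, which determine
  f and g by monotonicity, and then its exponents are the entries of M. Hence this
  monomial occurs in Phi_N with coefficient [N = M], and a linear combination of the
  Phi_N can be read off coefficientwise, provided every packed matrix admits such f, g,
  i.e. provided X and Y are infinite. Conversely, if X is finite, a column of card X + 1
  ones has Phi = 0.\<close>

definition incr_maps :: "'a::linorder set \<Rightarrow> nat \<Rightarrow> (nat \<Rightarrow> 'a) set" where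
  "incr_maps X k = {f. f \<in> {..<k} \<rightarrow>\<^sub>E X \<and> strict_mono_on {..<k} f}"

lemma Phi_eq_card_incr_maps:
  "Phi X Y M m = of_nat (card {(f,g). f \<in> incr_maps X (dim_row M) \<and>
      g \<in> incr_maps Y (dim_col M) \<and> m = monom_of M f g})"
  unfolding Phi_def incr_maps_def by (simp add: conj_assoc)

lemma incr_maps_eq_empty_iff:
  "incr_maps X k = {} \<longleftrightarrow> finite X \<and> card X < k"
proof
  assume "incr_maps X k = {}"
  show "finite X \<and> card X < k"
  proof (rule ccontr)
    assume "\<not> (finite X \<and> card X < k)"
    then obtain B where B: "B \<subseteq> X" "card B = k" "finite B"
    proof (cases "finite X")
      case True
      with \<open>\<not> (finite X \<and> card X < k)\<close> have "k \<le> card X" by simp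
      from obtain_subset_with_card_n[OF this] that show thesis by blast
    next
      case False
      from infinite_arbitrarily_large[OF this, of k] that show thesis by blast
    qed
    define xs where "xs = sorted_list_of_set B"
    have xs: "length xs = k" "set xs = B" "sorted_wrt (<) xs"
      using B by (simp_all add: xs_def)
    have "(\<lambda>r. if r < k then xs ! r else undefined) \<in> incr_maps X k"
      using xs B(1) unfolding incr_maps_def sorted_wrt_iff_nth_less strict_mono_on_def
      by (auto simp: PiE_iff extensional_def)
    with \<open>incr_maps X k = {}\<close> show False by blast
  qed
next
  assume X: "finite X \<and> card X < k"
  show "incr_maps X k = {}"
  proof (rule ccontr)
    assume "incr_maps X k \<noteq> {}"
    then obtain f where "f \<in> {..<k} \<rightarrow>\<^sub>E X" "strict_mono_on {..<k} f"
      unfolding incr_maps_def by blast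
    then have "inj_on f {..<k}" "f ` {..<k} \<subseteq> X"
      by (auto intro: strict_mono_on_imp_inj_on)
    then have "k \<le> card X"
      using card_inj_on_le[of f "{..<k}" X] X by simp
    with X show False by simp
  qed
qed

lemma strict_mono_on_lessThan_eq_if_image_eq:
  fixes f f' :: "nat \<Rightarrow> 'a::linorder"
  assumes "strict_mono_on {..<k} f" "strict_mono_on {..<k'} f'"
    and "f ` {..<k} = f' ` {..<k'}"
  shows "k = k'" and "\<forall>r<k. f r = f' r"
proof -
  have "sorted_wrt (<) (map f [0..<k])" "sorted_wrt (<) (map f' [0..<k'])"
    using assms(1,2) by (auto simp: sorted_wrt_iff_nth_less strict_mono_on_def)
  then have eq: "map f [0..<k] = map f' [0..<k']"
    using assms(3) by (intro strict_sorted_equal) (simp_all add: lessThan_atLeast0)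
  from arg_cong[OF eq, of length] show "k = k'" by simp
  show "\<forall>r<k. f r = f' r"
  proof (intro allI impI)
    fix r assume "r < k"
    have "map f [0..<k] ! r = map f' [0..<k'] ! r"
      using eq by simp
    with \<open>r < k\<close> \<open>k = k'\<close> show "f r = f' r"
      by simp
  qed
qed

lemma monom_of_at_image:
  assumes f: "inj_on f {..<dim_row M}" and g: "inj_on g {..<dim_col M}"
    and r: "r < dim_row M" and s: "s < dim_col M"
  shows "monom_of M f g (f r, g s) = M $$ (r,s)"
proof -
  have "monom_of M f g (f r, g s) =
      (\<Sum>r'<dim_row M. \<Sum>s'<dim_col M. if r' = r \<and> s' = s then M $$ (r',s') else 0)"
    unfolding monom_of_def using f g r s
    by (auto intro!: sum.cong simp: inj_on_eq_iff)
  also have "\<dots> = (\<Sum>r'<dim_row M. if r' = r then M $$ (r,s) else 0)"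
    using s by (intro sum.cong) auto
  also have "\<dots> = M $$ (r,s)"
    using r by simp
  finally show ?thesis .
qed

lemma monom_of_nonzero_imp:
  assumes "monom_of M f g (a,b) \<noteq> 0"
  shows "\<exists>r<dim_row M. \<exists>s<dim_col M. f r = a \<and> g s = b \<and> M $$ (r,s) \<noteq> 0"
proof (rule ccontr)
  assume "\<not> ?thesis"
  then have "monom_of M f g (a,b) = 0"
    unfolding monom_of_def by (auto intro!: sum.neutral)
  with assms show False by simp
qed

lemma monom_of_support:
  assumes "packed M" "inj_on f {..<dim_row M}" "inj_on g {..<dim_col M}"
  shows "{a. \<exists>b. monom_of M f g (a,b) \<noteq> 0} = f ` {..<dim_row M}"
    and "{b. \<exists>a. monom_of M f g (a,b) \<noteq> 0} = g ` {..<dim_col M}"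
proof -
  have nz: "monom_of M f g (f r, g s) \<noteq> 0"
    if "r < dim_row M" "s < dim_col M" "M $$ (r,s) \<noteq> 0" for r s
    using monom_of_at_image[OF assms(2,3) that(1,2)] that(3) by simp
  show "{a. \<exists>b. monom_of M f g (a,b) \<noteq> 0} = f ` {..<dim_row M}"
  proof (intro equalityI subsetI)
    fix a assume "a \<in> f ` {..<dim_row M}"
    then obtain r where "r < dim_row M" "a = f r" by auto
    moreover obtain s where "s < dim_col M" "M $$ (r,s) \<noteq> 0"
      using assms(1) \<open>r < dim_row M\<close> unfolding packed_def by blast
    ultimately show "a \<in> {a. \<exists>b. monom_of M f g (a,b) \<noteq> 0}"
      using nz by blast
  qed (use monom_of_nonzero_imp in fastforce)
  show "{b. \<exists>a. monom_of M f g (a,b) \<noteq> 0} = g ` {..<dim_col M}"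
  proof (intro equalityI subsetI)
    fix b assume "b \<in> g ` {..<dim_col M}"
    then obtain s where "s < dim_col M" "b = g s" by auto
    moreover obtain r where "r < dim_row M" "M $$ (r,s) \<noteq> 0"
      using assms(1) \<open>s < dim_col M\<close> unfolding packed_def by blast
    ultimately show "b \<in> {b. \<exists>a. monom_of M f g (a,b) \<noteq> 0}"
      using nz by blast
  qed (use monom_of_nonzero_imp in fastforce)
qed

lemma monom_of_eq_imp_eq:
  assumes "packed M" "packed N"
    and f: "f \<in> incr_maps X (dim_row M)" and g: "g \<in> incr_maps Y (dim_col M)"
    and f': "f' \<in> incr_maps X (dim_row N)" and g': "g' \<in> incr_maps Y (dim_col N)"
    and eq: "monom_of N f' g' = monom_of M f g"
  shows "N = M \<and> f' = f \<and> g' = g"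
proof -
  have mono: "strict_mono_on {..<dim_row M} f" "strict_mono_on {..<dim_col M} g"
    "strict_mono_on {..<dim_row N} f'" "strict_mono_on {..<dim_col N} g'"
    using f g f' g' by (simp_all add: incr_maps_def)
  note inj = mono[THEN strict_mono_on_imp_inj_on]
  have "f' ` {..<dim_row N} = f ` {..<dim_row M}" "g' ` {..<dim_col N} = g ` {..<dim_col M}"
    using monom_of_support[OF \<open>packed N\<close> inj(3,4)] monom_of_support[OF \<open>packed M\<close> inj(1,2)] eq
    by simp_all
  then have rows: "dim_row N = dim_row M" "\<forall>r<dim_row N. f' r = f r"
    and cols: "dim_col N = dim_col M" "\<forall>s<dim_col N. g' s = g s"
    using strict_mono_on_lessThan_eq_if_image_eq[OF mono(3,1)]
      strict_mono_on_lessThan_eq_if_image_eq[OF mono(4,2)] by blast+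
  have "N = M"
  proof (rule eq_matI)
    fix i j assume ij: "i < dim_row M" "j < dim_col M"
    have "N $$ (i,j) = monom_of N f' g' (f' i, g' j)"
      using monom_of_at_image[OF inj(3,4)] ij rows(1) cols(1) by simp
    also have "\<dots> = monom_of M f g (f i, g j)"
      using eq rows cols ij by simp
    also have "\<dots> = M $$ (i,j)"
      using monom_of_at_image[OF inj(1,2) ij] .
    finally show "N $$ (i,j) = M $$ (i,j)" .
  qed (simp_all add: rows(1) cols(1))
  moreover have "f' = f"
    using f f' rows by (intro PiE_ext[of f' "{..<dim_row M}" "\<lambda>_. X"]) (simp_all add: incr_maps_def)
  moreover have "g' = g"
    using g g' cols by (intro PiE_ext[of g' "{..<dim_col M}" "\<lambda>_. Y"]) (simp_all add: incr_maps_def)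
  ultimately show ?thesis by simp
qed

lemma Phi_at_monom_of:
  assumes "packed M" "packed N"
    and f: "f \<in> incr_maps X (dim_row M)" and g: "g \<in> incr_maps Y (dim_col M)"
  shows "Phi X Y N (monom_of M f g) = (if N = M then 1 else 0)"
proof -
  let ?S = "{(f',g'). f' \<in> incr_maps X (dim_row N) \<and> g' \<in> incr_maps Y (dim_col N) \<and>
      monom_of M f g = monom_of N f' g'}"
  have uniq: "N = M \<and> p = (f,g)" if "p \<in> ?S" for p
  proof -
    obtain f' g' where "p = (f',g')" "f' \<in> incr_maps X (dim_row N)" "g' \<in> incr_maps Y (dim_col N)"
      "monom_of N f' g' = monom_of M f g"
      using \<open>p \<in> ?S\<close> by auto
    with monom_of_eq_imp_eq[OF assms] show ?thesis
      by blast
  qed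
  have "?S = (if N = M then {(f,g)} else {})"
  proof (cases "N = M")
    case True
    have "?S \<subseteq> {(f,g)}"
    proof
      fix p assume "p \<in> ?S"
      from uniq[OF this] show "p \<in> {(f,g)}" by simp
    qed
    moreover have "(f,g) \<in> ?S"
      using f g True by simp
    ultimately show ?thesis
      using True by (simp only: if_True) (rule subset_antisym, simp_all)
  next
    case False
    then show ?thesis
      using uniq by (simp only: if_False) (rule equals0I, blast)
  qed
  then show ?thesis
    unfolding Phi_eq_card_incr_maps by simp
qed

lemma Phi_lin_at_monom_of:
  assumes c: "c \<in> HPack" and "packed M"
    and "f \<in> incr_maps X (dim_row M)" "g \<in> incr_maps Y (dim_col M)"
  shows "Phi_lin X Y c (monom_of M f g) = c M"
proof -
  have "Phi_lin X Y c (monom_of M f g) = (\<Sum>N\<in>{N. c N \<noteq> 0}. if N = M then c M else 0)"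
    unfolding Phi_lin_def
  proof (rule sum.cong)
    fix N assume "N \<in> {N. c N \<noteq> 0}"
    then have "packed N" using c unfolding HPack_def by blast
    then show "c N * Phi X Y N (monom_of M f g) = (if N = M then c M else 0)"
      using Phi_at_monom_of[OF assms(2) _ assms(3,4)] by simp
  qed simp
  also have "\<dots> = c M"
    using c unfolding HPack_def by (simp add: sum.delta)
  finally show ?thesis .
qed

lemma inj_on_Phi_lin_if_infinite:
  assumes "infinite X" "infinite Y"
  shows "inj_on (Phi_lin X Y) HPack"
proof (rule inj_onI, rule ext)
  fix c c' M assume c: "c \<in> HPack" and c': "c' \<in> HPack" and eq: "Phi_lin X Y c = Phi_lin X Y c'"
  show "c M = c' M"
  proof (cases "packed M")
    case True
    have "incr_maps X (dim_row M) \<noteq> {}" "incr_maps Y (dim_col M) \<noteq> {}"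
      using assms by (simp_all add: incr_maps_eq_empty_iff)
    then obtain f g where fg: "f \<in> incr_maps X (dim_row M)" "g \<in> incr_maps Y (dim_col M)"
      by blast
    have "c M = Phi_lin X Y c (monom_of M f g)"
      using Phi_lin_at_monom_of[OF c True fg] by simp
    also have "\<dots> = c' M"
      using Phi_lin_at_monom_of[OF c' True fg] eq by simp
    finally show ?thesis .
  next
    case False
    then have "c M = 0" "c' M = 0"
      using c c' unfolding HPack_def by blast+
    then show ?thesis by simp
  qed
qed

lemma Phi_eq_zero_if_no_incr_maps:
  assumes "incr_maps X (dim_row M) = {} \<or> incr_maps Y (dim_col M) = {}"
  shows "Phi X Y M = (\<lambda>_. 0)"
  using assms by (auto simp: Phi_eq_card_incr_maps)

lemma not_inj_on_Phi_lin_if_Phi_eq_zero: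
  assumes "packed M" "Phi X Y M = (\<lambda>_. 0)"
  shows "\<not> inj_on (Phi_lin X Y) HPack"
proof
  let ?e = "\<lambda>N. if N = M then 1 else 0 :: rat"
  assume inj: "inj_on (Phi_lin X Y) HPack"
  have "{N. ?e N \<noteq> 0} = {M}" by auto
  then have "Phi_lin X Y ?e = Phi_lin X Y (\<lambda>_. 0)"
    using assms(2) by (simp add: Phi_lin_def)
  moreover have "?e \<in> HPack" "(\<lambda>_. 0) \<in> HPack"
    using assms(1) by (auto simp: HPack_def)
  ultimately have "?e = (\<lambda>_. 0)"
    by (rule inj_onD[OF inj])
  then have "?e M = 0" by (rule fun_cong)
  then show False by simp
qed

lemma not_inj_on_Phi_lin_if_finite:
  assumes "finite X \<or> finite Y"
  shows "\<not> inj_on (Phi_lin X Y) HPack"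
proof -
  let ?M = "mat (Suc (card X)) 1 (\<lambda>_. 1) :: nat mat"
  let ?N = "mat 1 (Suc (card Y)) (\<lambda>_. 1) :: nat mat"
  have "packed ?M" "packed ?N"
    unfolding packed_def by (auto intro!: exI[of _ 0])
  moreover have "Phi X Y ?M = (\<lambda>_. 0)" if "finite X"
    using that by (intro Phi_eq_zero_if_no_incr_maps) (simp add: incr_maps_eq_empty_iff)
  moreover have "Phi X Y ?N = (\<lambda>_. 0)" if "finite Y"
    using that by (intro Phi_eq_zero_if_no_incr_maps) (simp add: incr_maps_eq_empty_iff)
  ultimately show ?thesis
    using assms not_inj_on_Phi_lin_if_Phi_eq_zero by blast
qed

theorem mainTheorem12:
  fixes X :: "'a::linorder set" and Y :: "'b::linorder set"
  assumes "countable X" and "countable Y"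
  shows "inj_on (Phi_lin X Y) HPack \<longleftrightarrow> infinite X \<and> infinite Y"
  using inj_on_Phi_lin_if_infinite not_inj_on_Phi_lin_if_finite by blast

end
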